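(* Let $f\in(0,1)$ be a target frequency, $\epsilon>0$, $K,P\in\mathbb{Z}_{\ge1}$, and $\eta_g,\eta_s\in(0,1)$. Let $c$ be a candidate pattern whose true frequency $f_c\in[0,1]$ is the fraction of data owners whose local data contain $c$. Suppose $c$ has been responded to in $m_c\ge 1$ rounds, in each of which $P$ data owners respond, so $n_c=Pm_c$, and its accumulated response is $$r_c=\sum_{k=1}^{n_c} B_k+\sum_{\ell=1}^{m_c} G_\ell,$$ where $B_1,\dots,B_{n_c}$ are i.i.d. Bernoulli$(f_c)$ random variables (indicators that the sampled responding data owners contain $c$), $G_1,\dots,G_{m_c}$ are i.i.d. two-sided geometric random variables with parameter $\alpha=e^{-\epsilon/K}$, and the $B_k$ are independent of the $G_\ell$. Then $c$ is a frequent pattern (i.e. $f_c\ge f$) with confidence $(1-\eta_g)(1-\eta_s)$ when $$\frac{r_c}{n_c}-\sqrt{\frac{2e^{-\epsilon/K}}{2(1-e^{-\epsilon/K})^2P^2m_c\eta_g}}-\sqrt{\frac{\ln\eta_s}{-2n_c}}\ \ge\ f;$$ that is, with probability at least $(1-\eta_g)(1-\eta_s)$ one has $f_c\ge \frac{r_c}{n_c}-\sqrt{\frac{2e^{-\epsilon/K}}{2(1-e^{-\epsilon/K})^2P^2m_c\eta_g}}-\sqrt{\frac{\ln\eta_s}{-2n_c}}$, so that whenever the left-hand side of the displayed inequality is at least $f$, $f_c\ge f$.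
   Context: A two-sided geometric random variable $G(\alpha)$, $\alpha\in(0,1)$, has $\mathbb{P}(G(\alpha)=x)=\frac{1-\alpha}{1+\alpha}\alpha^{|x|}$ for $x\in\mathbb{Z}$; it arises as the aggregate of the distributed Pólya noises added by the $P$ responders of a candidate in one round. A pattern is frequent if its frequency among the data owners is at least the target frequency $f$. *)

theory Defs
  imports "HOL-Probability.Probability"
begin

definition two_sided_geom_prob :: "real \<Rightarrow> int \<Rightarrow> real" where
  "two_sided_geom_prob \<alpha> x = (1 - \<alpha>) / (1 + \<alpha>) * \<alpha> ^ nat \<bar>x\<bar>"

end

theory Submission
  imports Defs
begin

(* Write t and s for the two square roots subtracted in the statement.  The response splits as
   r = B + G, where B sums the n Bernoulli indicators and G the m two-sided geometric noises;
   B and G are independent.  Hoeffding's inequality gives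
   B < n (fc + s) except with probability exp (-2 n s^2) = eta_s.  Each noise is symmetric with
   second moment 2 alpha / (1 - alpha)^2, so G is symmetric with m times that second moment;
   symmetry halves the second-moment bound on |G|, which gives G < n t except with probability
   eta_g.  By independence both events hold with probability at least (1 - eta_g) (1 - eta_s),
   and on both of them r / n - t - s < fc. *)

lemma geometric_sums_times_n_squared:
  fixes c :: "'a::{banach,real_normed_field}"
  assumes "norm c < 1"
  shows "(\<lambda>n. c ^ n * of_nat n ^ 2) sums (c * (1 + c) / (1 - c) ^ 3)"
proof -
  have "1 - c \<noteq> 0"
    using assms by auto
  have "((\<lambda>z. z / (1 - z)\<^sup>2) has_field_derivative ((1 + c) / (1 - c) ^ 3)) (at c)"
  proof -
    define d where "d = 1 - c"
    have d: "c = 1 - d" "d \<noteq> 0"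
      using \<open>1 - c \<noteq> 0\<close> by (simp_all add: d_def)
    show ?thesis
      apply (rule derivative_eq_intros refl)+
      unfolding d(1) by (simp add: d(2)) (simp add: d(2) field_simps eval_nat_numeral)
  qed
  then have "(\<lambda>n. diffs of_nat n * c ^ n) sums ((1 + c) / (1 - c) ^ 3)"
    using assms geometric_sums_times_n
    by (intro termdiffs_sums_strong[where K = 1]) (auto simp: mult.commute)
  then have "(\<lambda>n. c * (of_nat (Suc n) ^ 2 * c ^ n)) sums (c * ((1 + c) / (1 - c) ^ 3))"
    by (intro sums_mult) (simp add: diffs_def power2_eq_square)
  then have "(\<lambda>n. c ^ Suc n * of_nat (Suc n) ^ 2) sums (c * (1 + c) / (1 - c) ^ 3)"
    by (simp add: algebra_simps)
  then show ?thesis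
    by (subst (asm) sums_Suc_iff) simp
qed

lemma nn_integral_nat_valued:
  fixes N :: "'a \<Rightarrow> nat" and g :: "nat \<Rightarrow> ennreal"
  assumes [measurable]: "N \<in> measurable M (count_space UNIV)"
  shows "(\<integral>\<^sup>+\<omega>. g (N \<omega>) \<partial>M) = (\<Sum>j. g j * emeasure M {\<omega>\<in>space M. N \<omega> = j})"
proof -
  have "(\<integral>\<^sup>+\<omega>. g (N \<omega>) \<partial>M) = (\<integral>\<^sup>+\<omega>. (\<Sum>j. g j * indicator {\<omega>\<in>space M. N \<omega> = j} \<omega>) \<partial>M)"
  proof (intro nn_integral_cong)
    fix \<omega> assume "\<omega> \<in> space M"
    then have "(\<lambda>j. g j * indicator {\<omega>\<in>space M. N \<omega> = j} \<omega>) = (\<lambda>j. if j = N \<omega> then g j else 0)"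
      by (auto simp: fun_eq_iff)
    then show "g (N \<omega>) = (\<Sum>j. g j * indicator {\<omega>\<in>space M. N \<omega> = j} \<omega>)"
      using sums_single[of "N \<omega>" g] by (simp add: sums_iff)
  qed
  also have "\<dots> = (\<Sum>j. g j * emeasure M {\<omega>\<in>space M. N \<omega> = j})"
    by (simp add: nn_integral_suminf nn_integral_cmult_indicator)
  finally show ?thesis .
qed

lemma two_sided_geom_prob_uminus [simp]:
  "two_sided_geom_prob \<alpha> (- x) = two_sided_geom_prob \<alpha> x"
  by (simp add: two_sided_geom_prob_def)

context prob_space
begin

lemma expectation_eq_0_if_distr_uminus_eq:
  fixes Z :: "'a \<Rightarrow> real"
  assumes [measurable]: "Z \<in> borel_measurable M"
    and symmetric: "distr M borel (\<lambda>\<omega>. - Z \<omega>) = distr M borel Z"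
  shows "expectation Z = 0"
proof -
  have "expectation (\<lambda>\<omega>. - Z \<omega>) = integral\<^sup>L (distr M borel (\<lambda>\<omega>. - Z \<omega>)) (\<lambda>x. x)"
    by (simp add: integral_distr)
  also have "\<dots> = expectation Z"
    by (simp add: symmetric integral_distr)
  finally show ?thesis
    by simp
qed

lemma distr_uminus_real_of_int_eq:
  fixes Y :: "'a \<Rightarrow> int"
  assumes [measurable]: "Y \<in> measurable M (count_space UNIV)"
    and symmetric: "\<And>x. prob {\<omega>\<in>space M. Y \<omega> = - x} = prob {\<omega>\<in>space M. Y \<omega> = x}"
  shows "distr M borel (\<lambda>\<omega>. - real_of_int (Y \<omega>)) = distr M borel (\<lambda>\<omega>. real_of_int (Y \<omega>))"
proof -
  have "distr M (count_space UNIV) (\<lambda>\<omega>. - Y \<omega>) = distr M (count_space UNIV) Y"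
  proof (rule measure_eqI_countable[where A = UNIV])
    fix x :: int
    have "(\<lambda>\<omega>. - Y \<omega>) -` {x} \<inter> space M = {\<omega>\<in>space M. Y \<omega> = - x}"
         "Y -` {x} \<inter> space M = {\<omega>\<in>space M. Y \<omega> = x}"
      by auto
    then show "emeasure (distr M (count_space UNIV) (\<lambda>\<omega>. - Y \<omega>)) {x}
             = emeasure (distr M (count_space UNIV) Y) {x}"
      by (simp add: emeasure_distr emeasure_eq_measure symmetric)
  qed auto
  then have "distr (distr M (count_space UNIV) (\<lambda>\<omega>. - Y \<omega>)) borel real_of_int
           = distr (distr M (count_space UNIV) Y) borel real_of_int"
    by simp
  then show ?thesis
    by (simp add: distr_distr comp_def)
qed

lemma distr_uminus_sum_indep_eq:
  fixes Y :: "'i \<Rightarrow> 'a \<Rightarrow> real"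
  assumes "finite J" and indep: "indep_vars (\<lambda>_. borel) Y J"
    and symmetric: "\<And>j. j \<in> J \<Longrightarrow> distr M borel (\<lambda>\<omega>. - Y j \<omega>) = distr M borel (Y j)"
  shows "distr M borel (\<lambda>\<omega>. - (\<Sum>j\<in>J. Y j \<omega>)) = distr M borel (\<lambda>\<omega>. \<Sum>j\<in>J. Y j \<omega>)"
proof (cases "J = {}")
  case False
  have [measurable]: "Y j \<in> borel_measurable M" if "j \<in> J" for j
    using indep that by (simp add: indep_vars_def)
  have indep_uminus: "indep_vars (\<lambda>_. borel) (\<lambda>j \<omega>. - Y j \<omega>) J"
    by (rule indep_vars_compose2[OF indep]) auto
  let ?N = "PiM J (\<lambda>_. borel :: real measure)"
  have joint: "distr M ?N (\<lambda>\<omega>. \<lambda>j\<in>J. - Y j \<omega>) = distr M ?N (\<lambda>\<omega>. \<lambda>j\<in>J. Y j \<omega>)"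
    using indep_vars_iff_distr_eq_PiM'[OF False, of "\<lambda>j \<omega>. - Y j \<omega>"]
      indep_vars_iff_distr_eq_PiM'[OF False, of Y] indep indep_uminus symmetric
    by (auto intro!: PiM_cong)
  have [measurable]: "(\<lambda>x. \<Sum>j\<in>J. x j) \<in> borel_measurable ?N"
    by measurable
  have "distr (distr M ?N (\<lambda>\<omega>. \<lambda>j\<in>J. - Y j \<omega>)) borel (\<lambda>x. \<Sum>j\<in>J. x j)
      = distr (distr M ?N (\<lambda>\<omega>. \<lambda>j\<in>J. Y j \<omega>)) borel (\<lambda>x. \<Sum>j\<in>J. x j)"
    by (simp only: joint)
  then show ?thesis
    by (simp add: distr_distr comp_def sum_negf)
qed simp

lemma prob_ge_le_second_moment_if_symmetric:
  fixes Z :: "'a \<Rightarrow> real"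
  assumes [measurable]: "Z \<in> borel_measurable M"
    and symmetric: "distr M borel (\<lambda>\<omega>. - Z \<omega>) = distr M borel Z"
    and "integrable M (\<lambda>\<omega>. Z \<omega> ^ 2)" and "a > 0"
  shows "prob {\<omega>\<in>space M. Z \<omega> \<ge> a} \<le> expectation (\<lambda>\<omega>. Z \<omega> ^ 2) / (2 * a ^ 2)"
proof -
  have "prob {\<omega>\<in>space M. - Z \<omega> \<ge> a} = measure (distr M borel (\<lambda>\<omega>. - Z \<omega>)) {a..}"
    by (simp add: measure_distr vimage_def Int_def conj_commute)
  also have "\<dots> = prob {\<omega>\<in>space M. Z \<omega> \<ge> a}"
    by (simp add: symmetric measure_distr vimage_def Int_def conj_commute)
  finally have tails: "prob {\<omega>\<in>space M. - Z \<omega> \<ge> a} = prob {\<omega>\<in>space M. Z \<omega> \<ge> a}" .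
  have "{\<omega>\<in>space M. \<bar>Z \<omega>\<bar> \<ge> a} = {\<omega>\<in>space M. Z \<omega> \<ge> a} \<union> {\<omega>\<in>space M. - Z \<omega> \<ge> a}"
    by auto
  then have "prob {\<omega>\<in>space M. \<bar>Z \<omega>\<bar> \<ge> a} = 2 * prob {\<omega>\<in>space M. Z \<omega> \<ge> a}"
    using \<open>a > 0\<close> tails by (simp, subst finite_measure_Union) auto
  moreover have "prob {\<omega>\<in>space M. \<bar>Z \<omega>\<bar> \<ge> a} \<le> expectation (\<lambda>\<omega>. Z \<omega> ^ 2) / a ^ 2"
    using assms by (intro second_moment_method) auto
  ultimately show ?thesis
    by (simp add: field_simps)
qed

lemma expectation_sum_squared_indep:
  fixes Y :: "'i \<Rightarrow> 'a \<Rightarrow> real"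
  assumes "finite J" and indep: "indep_vars (\<lambda>_. borel) Y J"
    and square_integrable: "\<And>j. j \<in> J \<Longrightarrow> integrable M (\<lambda>\<omega>. Y j \<omega> ^ 2)"
    and centered: "\<And>j. j \<in> J \<Longrightarrow> expectation (Y j) = 0"
  shows "integrable M (\<lambda>\<omega>. (\<Sum>j\<in>J. Y j \<omega>) ^ 2)"
    and "expectation (\<lambda>\<omega>. (\<Sum>j\<in>J. Y j \<omega>) ^ 2) = (\<Sum>j\<in>J. expectation (\<lambda>\<omega>. Y j \<omega> ^ 2))"
proof -
  have integrable: "integrable M (Y j)" if "j \<in> J" for j
  proof (rule square_integrable_imp_integrable)
    show "Y j \<in> borel_measurable M"
      using indep that unfolding indep_vars_def by blast
  qed (fact square_integrable[OF that])
  have product: "integrable M (\<lambda>\<omega>. Y i \<omega> * Y j \<omega>) \<and>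
      expectation (\<lambda>\<omega>. Y i \<omega> * Y j \<omega>) = (if i = j then expectation (\<lambda>\<omega>. Y j \<omega> ^ 2) else 0)"
    if "i \<in> J" "j \<in> J" for i j
  proof (cases "i = j")
    case True
    then show ?thesis
      using square_integrable[OF that(2)] by (simp add: power2_eq_square)
  next
    case False
    have indep_ij: "indep_vars (\<lambda>_. borel) Y {i, j}"
      using that by (intro indep_vars_subset[OF indep]) auto
    have "integrable M (\<lambda>\<omega>. \<Prod>k\<in>{i, j}. Y k \<omega>)"
      using that by (intro indep_vars_integrable[OF _ indep_ij]) (auto intro: integrable)
    moreover have "expectation (\<lambda>\<omega>. \<Prod>k\<in>{i, j}. Y k \<omega>) = (\<Prod>k\<in>{i, j}. expectation (Y k))"
      using that by (intro indep_vars_lebesgue_integral[OF _ indep_ij]) (auto intro: integrable)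
    ultimately show ?thesis
      using False that centered by simp
  qed
  have square: "(\<lambda>\<omega>. (\<Sum>j\<in>J. Y j \<omega>) ^ 2) = (\<lambda>\<omega>. \<Sum>i\<in>J. \<Sum>j\<in>J. Y i \<omega> * Y j \<omega>)"
    by (simp add: power2_eq_square sum_product)
  show "integrable M (\<lambda>\<omega>. (\<Sum>j\<in>J. Y j \<omega>) ^ 2)"
    unfolding square using product by (intro Bochner_Integration.integrable_sum) auto
  have "expectation (\<lambda>\<omega>. (\<Sum>j\<in>J. Y j \<omega>) ^ 2)
      = (\<Sum>i\<in>J. \<Sum>j\<in>J. expectation (\<lambda>\<omega>. Y i \<omega> * Y j \<omega>))"
    unfolding square using product
    by (subst Bochner_Integration.integral_sum)
      (auto intro!: sum.cong Bochner_Integration.integral_sum Bochner_Integration.integrable_sum)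
  also have "\<dots> = (\<Sum>i\<in>J. \<Sum>j\<in>J. if i = j then expectation (\<lambda>\<omega>. Y j \<omega> ^ 2) else 0)"
    using product by (intro sum.cong refl) auto
  also have "\<dots> = (\<Sum>j\<in>J. expectation (\<lambda>\<omega>. Y j \<omega> ^ 2))"
    using \<open>finite J\<close> by (simp add: sum.delta)
  finally show "expectation (\<lambda>\<omega>. (\<Sum>j\<in>J. Y j \<omega>) ^ 2) = (\<Sum>j\<in>J. expectation (\<lambda>\<omega>. Y j \<omega> ^ 2))" .
qed

lemma indep_var_sum_disjoint:
  fixes Y :: "'i \<Rightarrow> 'a \<Rightarrow> real"
  assumes indep: "indep_vars (\<lambda>_. borel) Y (I \<union> J)" and "I \<inter> J = {}" "finite I" "finite J"
  shows "indep_var borel (\<lambda>\<omega>. \<Sum>i\<in>I. Y i \<omega>) borel (\<lambda>\<omega>. \<Sum>j\<in>J. Y j \<omega>)"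
proof -
  have "indep_var borel ((\<lambda>x. \<Sum>i\<in>I. x i) \<circ> (\<lambda>\<omega>. restrict (\<lambda>i. Y i \<omega>) I))
                   borel ((\<lambda>x. \<Sum>j\<in>J. x j) \<circ> (\<lambda>\<omega>. restrict (\<lambda>j. Y j \<omega>) J))"
    using assms by (intro indep_var_compose[OF indep_var_restrict[OF indep]]) auto
  then show ?thesis
    by (simp add: comp_def)
qed

lemma prob_add_less_ge_indep_var:
  fixes F G :: "'a \<Rightarrow> real"
  assumes indep: "indep_var borel F borel G"
    and "prob {\<omega>\<in>space M. F \<omega> \<ge> u} \<le> \<delta>" "\<delta> \<le> 1"
    and "prob {\<omega>\<in>space M. G \<omega> \<ge> v} \<le> \<delta>'" "\<delta>' \<le> 1"
  shows "(1 - \<delta>) * (1 - \<delta>') \<le> prob {\<omega>\<in>space M. F \<omega> + G \<omega> < u + v}"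
proof -
  have [measurable]: "F \<in> borel_measurable M" "G \<in> borel_measurable M"
    using indep by (rule indep_var_rv1, rule indep_var_rv2)
  have below: "prob {\<omega>\<in>space M. H \<omega> < c} = 1 - prob {\<omega>\<in>space M. H \<omega> \<ge> c}"
    if [measurable]: "H \<in> borel_measurable M" for H :: "'a \<Rightarrow> real" and c
  proof -
    have "{\<omega>\<in>space M. H \<omega> < c} = space M - {\<omega>\<in>space M. H \<omega> \<ge> c}"
      by auto
    then show ?thesis
      by (simp add: prob_compl)
  qed
  have lower_F: "1 - \<delta> \<le> prob {\<omega>\<in>space M. F \<omega> < u}"
    using assms by (simp add: below)
  have lower_G: "1 - \<delta>' \<le> prob {\<omega>\<in>space M. G \<omega> < v}"
    using assms by (simp add: below)
  have "(1 - \<delta>) * (1 - \<delta>') \<le> prob {\<omega>\<in>space M. F \<omega> < u} * prob {\<omega>\<in>space M. G \<omega> < v}"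
    using lower_F lower_G assms by (intro mult_mono) auto
  also have "\<dots> = prob {\<omega>\<in>space M. F \<omega> < u \<and> G \<omega> < v}"
    using indep_varD[OF indep, of "{..<u}" "{..<v}"] by (simp add: vimage_def Int_def conj_commute)
  also have "\<dots> \<le> prob {\<omega>\<in>space M. F \<omega> + G \<omega> < u + v}"
    by (intro finite_measure_mono) auto
  finally show ?thesis .
qed

lemma two_sided_geom_second_moment:
  fixes Y :: "'a \<Rightarrow> int"
  assumes [measurable]: "Y \<in> measurable M (count_space UNIV)" and "0 \<le> \<alpha>" "\<alpha> < 1"
    and distr_Y: "\<And>x. prob {\<omega>\<in>space M. Y \<omega> = x} = two_sided_geom_prob \<alpha> x"
  shows "integrable M (\<lambda>\<omega>. real_of_int (Y \<omega>) ^ 2)"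
    and "expectation (\<lambda>\<omega>. real_of_int (Y \<omega>) ^ 2) = 2 * \<alpha> / (1 - \<alpha>) ^ 2"
proof -
  define c where "c = (1 - \<alpha>) / (1 + \<alpha>)"
  have "c \<ge> 0"
    using assms by (simp add: c_def)
  have level: "emeasure M {\<omega>\<in>space M. nat \<bar>Y \<omega>\<bar> = j} = ennreal (if j = 0 then c else 2 * c * \<alpha> ^ j)"
    for j
  proof (cases "j = 0")
    case True
    then have "{\<omega>\<in>space M. nat \<bar>Y \<omega>\<bar> = j} = {\<omega>\<in>space M. Y \<omega> = 0}"
      by auto
    with True show ?thesis
      by (simp add: emeasure_eq_measure distr_Y two_sided_geom_prob_def c_def)
  next
    case False
    then have "{\<omega>\<in>space M. nat \<bar>Y \<omega>\<bar> = j} = {\<omega>\<in>space M. Y \<omega> = int j} \<union> {\<omega>\<in>space M. Y \<omega> = - int j}"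
      by auto
    also have "prob \<dots> = prob {\<omega>\<in>space M. Y \<omega> = int j} + prob {\<omega>\<in>space M. Y \<omega> = - int j}"
      using False by (intro finite_measure_Union) auto
    finally show ?thesis
      using False by (simp add: emeasure_eq_measure distr_Y two_sided_geom_prob_def c_def algebra_simps)
  qed
  have series: "(\<lambda>j. 2 * c * (\<alpha> ^ j * real j ^ 2)) sums (2 * \<alpha> / (1 - \<alpha>) ^ 2)"
  proof -
    have "1 - \<alpha> \<noteq> 0" "1 + \<alpha> \<noteq> 0"
      using assms by auto
    then have "2 * c * (\<alpha> * (1 + \<alpha>) / (1 - \<alpha>) ^ 3) = 2 * \<alpha> / (1 - \<alpha>) ^ 2"
      unfolding c_def by (simp add: divide_simps) (simp add: algebra_simps eval_nat_numeral)
    moreover have "(\<lambda>j. 2 * c * (\<alpha> ^ j * real j ^ 2)) sums (2 * c * (\<alpha> * (1 + \<alpha>) / (1 - \<alpha>) ^ 3))"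
      using assms by (intro sums_mult geometric_sums_times_n_squared) auto
    ultimately show ?thesis
      by simp
  qed
  have "(\<integral>\<^sup>+\<omega>. ennreal (real_of_int (Y \<omega>) ^ 2) \<partial>M) = (\<integral>\<^sup>+\<omega>. ennreal (real (nat \<bar>Y \<omega>\<bar>) ^ 2) \<partial>M)"
    by simp
  also have "\<dots> = (\<Sum>j. ennreal (real j ^ 2) * emeasure M {\<omega>\<in>space M. nat \<bar>Y \<omega>\<bar> = j})"
    by (rule nn_integral_nat_valued) measurable
  also have "\<dots> = (\<Sum>j. ennreal (2 * c * (\<alpha> ^ j * real j ^ 2)))"
    using \<open>c \<ge> 0\<close> \<open>0 \<le> \<alpha>\<close> by (intro suminf_cong) (simp add: level flip: ennreal_mult)
  also have "\<dots> = ennreal (2 * \<alpha> / (1 - \<alpha>) ^ 2)"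
    using series \<open>c \<ge> 0\<close> \<open>0 \<le> \<alpha>\<close> by (simp add: suminf_ennreal2 sums_iff)
  finally have nn: "(\<integral>\<^sup>+\<omega>. ennreal (real_of_int (Y \<omega>) ^ 2) \<partial>M) = ennreal (2 * \<alpha> / (1 - \<alpha>) ^ 2)" .
  show "integrable M (\<lambda>\<omega>. real_of_int (Y \<omega>) ^ 2)"
    by (rule integrableI_nn_integral_finite[OF _ _ nn]) auto
  show "expectation (\<lambda>\<omega>. real_of_int (Y \<omega>) ^ 2) = 2 * \<alpha> / (1 - \<alpha>) ^ 2"
    using assms by (subst integral_eq_nn_integral) (auto simp: nn)
qed

lemma prob_sum_two_sided_geom_ge:
  fixes X :: "'i \<Rightarrow> 'a \<Rightarrow> int"
  assumes "finite J" and indep: "indep_vars (\<lambda>_. count_space UNIV) X J"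
    and "0 \<le> \<alpha>" "\<alpha> < 1" "a > 0"
    and distr_X: "\<And>j x. j \<in> J \<Longrightarrow> prob {\<omega>\<in>space M. X j \<omega> = x} = two_sided_geom_prob \<alpha> x"
  shows "prob {\<omega>\<in>space M. (\<Sum>j\<in>J. real_of_int (X j \<omega>)) \<ge> a}
           \<le> real (card J) * \<alpha> / ((1 - \<alpha>) ^ 2 * a ^ 2)"
proof -
  define Y where "Y j \<omega> = real_of_int (X j \<omega>)" for j \<omega>
  define Z where "Z \<omega> = (\<Sum>j\<in>J. Y j \<omega>)" for \<omega>
  have [measurable]: "X j \<in> measurable M (count_space UNIV)" if "j \<in> J" for j
    using indep that unfolding indep_vars_def by blast
  have indep_Y: "indep_vars (\<lambda>_. borel) Y J"
    unfolding Y_def by (rule indep_vars_compose2[OF indep]) auto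
  have symmetric: "distr M borel (\<lambda>\<omega>. - Y j \<omega>) = distr M borel (Y j)" if "j \<in> J" for j
    unfolding Y_def using that by (intro distr_uminus_real_of_int_eq) (auto simp: distr_X)
  have moments: "integrable M (\<lambda>\<omega>. Y j \<omega> ^ 2)" "expectation (\<lambda>\<omega>. Y j \<omega> ^ 2) = 2 * \<alpha> / (1 - \<alpha>) ^ 2"
    if "j \<in> J" for j
    unfolding Y_def using that assms by (auto intro: two_sided_geom_second_moment)
  have measurable_Y [measurable]: "Y j \<in> borel_measurable M" if "j \<in> J" for j
    unfolding Y_def using that by measurable
  have [measurable]: "Z \<in> borel_measurable M"
    unfolding Z_def using \<open>finite J\<close> by measurable
  have "prob {\<omega>\<in>space M. Z \<omega> \<ge> a} \<le> expectation (\<lambda>\<omega>. Z \<omega> ^ 2) / (2 * a ^ 2)"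
  proof (rule prob_ge_le_second_moment_if_symmetric)
    show "distr M borel (\<lambda>\<omega>. - Z \<omega>) = distr M borel Z"
      unfolding Z_def using \<open>finite J\<close> indep_Y symmetric by (rule distr_uminus_sum_indep_eq)
    show "integrable M (\<lambda>\<omega>. Z \<omega> ^ 2)"
      unfolding Z_def using \<open>finite J\<close> indep_Y moments symmetric measurable_Y
      by (intro expectation_sum_squared_indep expectation_eq_0_if_distr_uminus_eq) auto
  qed (use \<open>a > 0\<close> in auto)
  also have "expectation (\<lambda>\<omega>. Z \<omega> ^ 2) = real (card J) * (2 * \<alpha> / (1 - \<alpha>) ^ 2)"
    unfolding Z_def using \<open>finite J\<close> indep_Y moments symmetric measurable_Y
    by (subst expectation_sum_squared_indep) (auto intro: expectation_eq_0_if_distr_uminus_eq)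
  finally show ?thesis
    by (simp add: Z_def Y_def)
qed

lemma prob_sum_bernoulli_ge:
  fixes Y :: "'i \<Rightarrow> 'a \<Rightarrow> real"
  assumes "finite I" "I \<noteq> {}" "indep_vars (\<lambda>_. borel) Y I"
    and zero_one: "\<And>i \<omega>. i \<in> I \<Longrightarrow> \<omega> \<in> space M \<Longrightarrow> Y i \<omega> \<in> {0, 1}"
    and success: "\<And>i. i \<in> I \<Longrightarrow> prob {\<omega>\<in>space M. Y i \<omega> = 1} = p"
    and "s \<ge> 0"
  shows "prob {\<omega>\<in>space M. (\<Sum>i\<in>I. Y i \<omega>) \<ge> real (card I) * (p + s)}
           \<le> exp (- 2 * real (card I) * s ^ 2)"
proof -
  interpret Hoeffding_ineq M I Y "\<lambda>_. 0" "\<lambda>_. 1" "\<Sum>i\<in>I. expectation (Y i)"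
  proof unfold_locales
    show "AE \<omega> in M. Y i \<omega> \<in> {0..1}" if "i \<in> I" for i
      using zero_one[OF that] by (intro AE_I2) fastforce
  qed (use assms in auto)
  have "expectation (Y i) = p" if "i \<in> I" for i
  proof -
    have "expectation (Y i) = expectation (indicator {\<omega>\<in>space M. Y i \<omega> = 1})"
      using zero_one[OF that] by (intro Bochner_Integration.integral_cong) (auto simp: indicator_def)
    also have "\<dots> = p"
      using that success[OF that] by simp
    finally show ?thesis .
  qed
  then have mean: "(\<Sum>i\<in>I. expectation (Y i)) = real (card I) * p"
    by simp
  have "prob {\<omega>\<in>space M. (\<Sum>i\<in>I. Y i \<omega>) \<ge> real (card I) * p + real (card I) * s}
          \<le> exp (- 2 * (real (card I) * s)\<^sup>2 / (\<Sum>i\<in>I. (1 - 0)\<^sup>2))"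
    using assms unfolding mean[symmetric] by (intro Hoeffding_ineq_ge) (auto simp: card_gt_0_iff)
  also have "- 2 * (real (card I) * s)\<^sup>2 / (\<Sum>i\<in>I. (1 - 0)\<^sup>2) = - 2 * real (card I) * s ^ 2"
    using assms by (simp add: power2_eq_square card_gt_0_iff)
  finally show ?thesis
    by (simp add: distrib_left)
qed

end

theorem theorem3:
  fixes M :: "'w measure"
    and f \<epsilon> \<eta>g \<eta>s fc :: real
    and K P m n :: nat
    and X :: "nat + nat \<Rightarrow> 'w \<Rightarrow> int"
    and r :: "'w \<Rightarrow> real"
  assumes "prob_space M"
    and "0 < f" "f < 1" "0 < \<epsilon>" "1 \<le> K" "1 \<le> P"
    and "0 < \<eta>g" "\<eta>g < 1" "0 < \<eta>s" "\<eta>s < 1"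
    and "0 \<le> fc" "fc \<le> 1"
    and "1 \<le> m" "n = P * m"
    and indep: "prob_space.indep_vars M (\<lambda>_. count_space UNIV) X
                  (Inl ` {..<n} \<union> Inr ` {..<m})"
    and bern_vals: "\<And>k \<omega>. k < n \<Longrightarrow> \<omega> \<in> space M \<Longrightarrow> X (Inl k) \<omega> \<in> {0, 1}"
    and bern_prob: "\<And>k. k < n \<Longrightarrow> measure M {\<omega> \<in> space M. X (Inl k) \<omega> = 1} = fc"
    and geom: "\<And>l x. l < m \<Longrightarrow>
                 measure M {\<omega> \<in> space M. X (Inr l) \<omega> = x}
                   = two_sided_geom_prob (exp (- \<epsilon> / real K)) x"
    and r_def: "\<And>\<omega>. r \<omega> = (\<Sum>k<n. real_of_int (X (Inl k) \<omega>))
                          + (\<Sum>l<m. real_of_int (X (Inr l) \<omega>))"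
  shows "measure M {\<omega> \<in> space M.
            fc \<ge> r \<omega> / real n
                 - sqrt (2 * exp (- \<epsilon> / real K)
                         / (2 * (1 - exp (- \<epsilon> / real K))\<^sup>2 * (real P)\<^sup>2 * real m * \<eta>g))
                 - sqrt (ln \<eta>s / (- 2 * real n))}
         \<ge> (1 - \<eta>g) * (1 - \<eta>s)"
proof -
  interpret prob_space M by fact
  define \<alpha> where "\<alpha> = exp (- \<epsilon> / real K)"
  define s where "s = sqrt (ln \<eta>s / (- 2 * real n))"
  define t where "t = sqrt (2 * \<alpha> / (2 * (1 - \<alpha>)\<^sup>2 * (real P)\<^sup>2 * real m * \<eta>g))"
  define I :: "(nat + nat) set" where "I = Inl ` {..<n}"
  define J :: "(nat + nat) set" where "J = Inr ` {..<m}"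
  define Y where "Y i \<omega> = real_of_int (X i \<omega>)" for i \<omega>
  have "0 < \<alpha>" "\<alpha> < 1" "0 < n" "0 < t" "0 \<le> s"
    using assms by (auto simp: \<alpha>_def t_def s_def divide_nonpos_pos)
  have index_sets: "finite I" "finite J" "I \<inter> J = {}" "I \<noteq> {}" "card I = n" "card J = m"
    using \<open>0 < n\<close> by (auto simp: I_def J_def card_image)
  have indep_Y: "indep_vars (\<lambda>_. borel) Y (I \<union> J)"
    unfolding Y_def I_def J_def by (rule indep_vars_compose2[OF indep]) auto
  have bernoulli: "prob {\<omega>\<in>space M. (\<Sum>i\<in>I. Y i \<omega>) \<ge> real n * (fc + s)} \<le> \<eta>s"
  proof -
    have "prob {\<omega>\<in>space M. (\<Sum>i\<in>I. Y i \<omega>) \<ge> real (card I) * (fc + s)}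
        \<le> exp (- 2 * real (card I) * s ^ 2)"
    proof (rule prob_sum_bernoulli_ge)
      show "indep_vars (\<lambda>_. borel) Y I"
        using indep_Y by (rule indep_vars_subset) auto
      show "Y i \<omega> \<in> {0, 1}" if "i \<in> I" "\<omega> \<in> space M" for i \<omega>
        using that bern_vals by (auto simp: I_def Y_def)
      show "prob {\<omega>\<in>space M. Y i \<omega> = 1} = fc" if "i \<in> I" for i
        using that bern_prob by (auto simp: I_def Y_def)
    qed (use index_sets \<open>0 \<le> s\<close> in auto)
    also have "exp (- 2 * real (card I) * s ^ 2) = \<eta>s"
      using index_sets \<open>0 < n\<close> \<open>0 < \<eta>s\<close> \<open>\<eta>s < 1\<close> by (simp add: s_def divide_nonpos_pos)
    finally show ?thesis
      by (simp add: index_sets)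
  qed
  have geometric: "prob {\<omega>\<in>space M. (\<Sum>j\<in>J. Y j \<omega>) \<ge> real n * t} \<le> \<eta>g"
  proof -
    have "prob {\<omega>\<in>space M. (\<Sum>j\<in>J. real_of_int (X j \<omega>)) \<ge> real n * t}
        \<le> real (card J) * \<alpha> / ((1 - \<alpha>) ^ 2 * (real n * t) ^ 2)"
    proof (rule prob_sum_two_sided_geom_ge)
      show "indep_vars (\<lambda>_. count_space UNIV) X J"
        using indep by (rule indep_vars_subset) (auto simp: J_def)
      show "prob {\<omega>\<in>space M. X j \<omega> = x} = two_sided_geom_prob \<alpha> x" if "j \<in> J" for j x
        using that geom by (auto simp: J_def \<alpha>_def)
    qed (use index_sets \<open>0 < \<alpha>\<close> \<open>\<alpha> < 1\<close> \<open>0 < t\<close> \<open>0 < n\<close> in auto)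
    also have "real (card J) * \<alpha> / ((1 - \<alpha>) ^ 2 * (real n * t) ^ 2) = \<eta>g"
      using index_sets assms \<open>0 < \<alpha>\<close> \<open>\<alpha> < 1\<close> unfolding t_def
      by (simp add: power_mult_distrib divide_simps) (simp add: algebra_simps power2_eq_square)
    finally show ?thesis
      by (simp add: Y_def)
  qed
  have r_split: "r = (\<lambda>\<omega>. (\<Sum>i\<in>I. Y i \<omega>) + (\<Sum>j\<in>J. Y j \<omega>))"
    by (simp add: fun_eq_iff r_def I_def J_def Y_def sum.reindex)
  have "(1 - \<eta>s) * (1 - \<eta>g)
      \<le> prob {\<omega>\<in>space M. (\<Sum>i\<in>I. Y i \<omega>) + (\<Sum>j\<in>J. Y j \<omega>) < real n * (fc + s) + real n * t}"
    using index_sets assms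
    by (intro prob_add_less_ge_indep_var[OF indep_var_sum_disjoint[OF indep_Y] bernoulli _ geometric]) auto
  also have "\<dots> \<le> prob {\<omega> \<in> space M. fc \<ge> r \<omega> / real n - t - s}"
  proof (rule finite_measure_mono)
    have "Y i \<in> borel_measurable M" if "i \<in> I \<union> J" for i
      using indep_Y that unfolding indep_vars_def by blast
    then have [measurable]: "r \<in> borel_measurable M"
      unfolding r_split by (intro borel_measurable_add borel_measurable_sum) auto
    show "{\<omega> \<in> space M. fc \<ge> r \<omega> / real n - t - s} \<in> sets M"
      by measurable
  qed (use \<open>0 < n\<close> in \<open>auto simp: r_split divide_simps algebra_simps\<close>)
  finally show ?thesis
    by (simp add: \<alpha>_def s_def t_def mult.commute)
qed

end
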